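(* Let $f\in L^2(\mathbb R^2)$ with $J(f)<+\infty$, and let $(w_n)\subset L^2(\mathbb R^2)$, $(\lambda_n)\subset(0,\infty)$ with $\|w_n\|_{L^2}\to0$ and $\lambda_n\to0^+$. Let $u_n$ be the unique minimizer over $u\in L^2(\mathbb R^2)$ of $\lambda_nJ(u)+\frac12\|u-f-w_n\|^2_{L^2}$. Then $\|u_n-f\|_{L^2}\to0$ and $\mathrm{supp}(Df)\subseteq\liminf_{n\to\infty}\mathrm{supp}(Du_n)$.
   Context: $J$ is the total variation on $\mathbb R^2$. For sets $S_n\subseteq\mathbb R^2$, the Painlevé–Kuratowski inner limit is $\liminf_n S_n=\{x: \limsup_n\mathrm{dist}(x,S_n)=0\}$ and the outer limit is $\limsup_n S_n=\{x:\liminf_n\mathrm{dist}(x,S_n)=0\}$. *)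

theory Defs
  imports "HOL-Analysis.Analysis"
begin

type_synonym R2 = "real \<times> real"

definition L2 :: "(R2 \<Rightarrow> real) \<Rightarrow> bool" where
  "L2 u \<longleftrightarrow> u \<in> borel_measurable lebesgue \<and> integrable lebesgue (\<lambda>x. (u x)\<^sup>2)"

definition L2norm :: "(R2 \<Rightarrow> real) \<Rightarrow> real" where
  "L2norm u = sqrt (LINT x|lebesgue. (u x)\<^sup>2)"

definition C1c :: "(R2 \<Rightarrow> R2) \<Rightarrow> bool" where
  "C1c \<phi> \<longleftrightarrow> (\<exists>D. (\<forall>x. (\<phi> has_derivative D x) (at x)) \<and> (\<forall>v. continuous_on UNIV (\<lambda>x. D x v)))
             \<and> compact (closure {x. \<phi> x \<noteq> 0})"

definition divg :: "(R2 \<Rightarrow> R2) \<Rightarrow> R2 \<Rightarrow> real" where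
  "divg \<phi> x = fst (frechet_derivative \<phi> (at x) (1, 0)) + snd (frechet_derivative \<phi> (at x) (0, 1))"

definition TV_on :: "R2 set \<Rightarrow> (R2 \<Rightarrow> real) \<Rightarrow> ereal" where
  "TV_on U u = (SUP \<phi> \<in> {\<phi>. C1c \<phi> \<and> closure {x. \<phi> x \<noteq> 0} \<subseteq> U \<and> (\<forall>x. norm (\<phi> x) \<le> 1)}.
                  ereal (LINT x|lebesgue. u x * divg \<phi> x))"

definition J :: "(R2 \<Rightarrow> real) \<Rightarrow> ereal" where
  "J u = TV_on UNIV u"

definition suppD :: "(R2 \<Rightarrow> real) \<Rightarrow> R2 set" where
  "suppD u = UNIV - \<Union>{U. open U \<and> TV_on U u = 0}"

text \<open>Painleve-Kuratowski inner limit: limsup_n dist(x,S_n) = 0 (dist to empty set = +infinity).\<close>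
definition PK_liminf :: "(nat \<Rightarrow> R2 set) \<Rightarrow> R2 set" where
  "PK_liminf S = {x. \<forall>e>0. eventually (\<lambda>n. \<exists>y\<in>S n. dist x y < e) sequentially}"

definition is_minimizer :: "real \<Rightarrow> (R2 \<Rightarrow> real) \<Rightarrow> (R2 \<Rightarrow> real) \<Rightarrow> bool" where
  "is_minimizer lam g u \<longleftrightarrow> L2 u \<and>
     (\<forall>v. L2 v \<longrightarrow> ereal lam * J u + ereal ((L2norm (\<lambda>x. u x - g x))\<^sup>2 / 2)
                    \<le> ereal lam * J v + ereal ((L2norm (\<lambda>x. v x - g x))\<^sup>2 / 2))"

end

theory Submission
  imports Defs
begin

text \<open>
  Testing minimality of \<open>u\<^sub>n\<close> against the competitor \<open>f\<close> gives
  \<open>\<parallel>u\<^sub>n - f - w\<^sub>n\<parallel>\<^sup>2 \<le> 2\<lambda>\<^sub>n J(f) + \<parallel>w\<^sub>n\<parallel>\<^sup>2\<close>, hence \<open>u\<^sub>n \<rightarrow> f\<close> in \<open>L\<^sup>2\<close>.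
  For the supports: if the ball \<open>B(x,e)\<close> misses \<open>supp Du\<^sub>n\<close> for infinitely many \<open>n\<close>,
  then by locality of the total variation (a partition of unity over the compact
  support of a test field) \<open>\<integral> u\<^sub>n div \<phi> = 0\<close> for every test field \<open>\<phi>\<close> supported in
  \<open>B(x,e/2)\<close> and each of these \<open>n\<close>. By \<open>L\<^sup>2\<close> convergence \<open>\<integral> f div \<phi> = 0\<close>, so
  \<open>|Df|(B(x,e/2)) = 0\<close> and \<open>x \<notin> supp Df\<close>.
\<close>

abbreviation tsupport :: "(R2 \<Rightarrow> 'a::zero) \<Rightarrow> R2 set" where
  "tsupport \<phi> \<equiv> closure {x. \<phi> x \<noteq> 0}"

abbreviation div_pairing :: "(R2 \<Rightarrow> real) \<Rightarrow> (R2 \<Rightarrow> R2) \<Rightarrow> real" where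
  "div_pairing u \<phi> \<equiv> LINT x|lebesgue. u x * divg \<phi> x"

section \<open>Square-integrable functions\<close>

lemma L2_continuous_compact_support:
  fixes g :: "R2 \<Rightarrow> real"
  assumes cont: "continuous_on UNIV g" and K: "compact K" and zero: "\<And>x. x \<notin> K \<Longrightarrow> g x = 0"
  shows "L2 g"
proof -
  have cont2: "continuous_on UNIV (\<lambda>x. (g x)\<^sup>2)" using cont by (intro continuous_intros)
  have "integrable lborel (\<lambda>x. indicator K x *\<^sub>R (g x)\<^sup>2)"
    using K cont2 by (intro borel_integrable_compact) (auto intro: continuous_on_subset)
  moreover have "(\<lambda>x. indicator K x *\<^sub>R (g x)\<^sup>2) = (\<lambda>x. (g x)\<^sup>2)"
    using zero by (auto simp: indicator_def fun_eq_iff)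
  ultimately have "integrable lebesgue (\<lambda>x. (g x)\<^sup>2)"
    using integrable_completion borel_measurable_continuous_onI[OF cont2] by auto
  moreover have "g \<in> borel_measurable lebesgue"
    using borel_measurable_continuous_onI[OF cont] by (auto intro: measurable_completion)
  ultimately show ?thesis unfolding L2_def by simp
qed

lemma L2_integrable_mult:
  assumes "L2 a" "L2 b"
  shows "integrable lebesgue (\<lambda>x. a x * b x)"
proof (rule Bochner_Integration.integrable_bound)
  show "integrable lebesgue (\<lambda>x. (a x)\<^sup>2 + (b x)\<^sup>2)" using assms unfolding L2_def by auto
  show "(\<lambda>x. a x * b x) \<in> borel_measurable lebesgue" using assms unfolding L2_def by auto
  have "norm (a x * b x) \<le> norm ((a x)\<^sup>2 + (b x)\<^sup>2)" for x
  proof -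
    have "2 * \<bar>a x * b x\<bar> \<le> (a x)\<^sup>2 + (b x)\<^sup>2"
      using sum_squares_bound[of "\<bar>a x\<bar>" "\<bar>b x\<bar>"] by (simp add: abs_mult power2_eq_square)
    then show ?thesis by simp
  qed
  then show "AE x in lebesgue. norm (a x * b x) \<le> norm ((a x)\<^sup>2 + (b x)\<^sup>2)"
    by (intro AE_I2)
qed

lemma L2_add:
  assumes "L2 a" "L2 b"
  shows "L2 (\<lambda>x. a x + b x)"
proof -
  have "(\<lambda>x. (a x + b x)\<^sup>2) = (\<lambda>x. (a x)\<^sup>2 + (b x)\<^sup>2 + 2 * (a x * b x))"
    by (auto simp: fun_eq_iff power2_eq_square algebra_simps)
  then show ?thesis
    using assms L2_integrable_mult[OF assms] unfolding L2_def by auto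
qed

lemma L2_diff:
  assumes "L2 a" "L2 b"
  shows "L2 (\<lambda>x. a x - b x)"
proof -
  have "(\<lambda>x. (a x - b x)\<^sup>2) = (\<lambda>x. (a x)\<^sup>2 + (b x)\<^sup>2 - 2 * (a x * b x))"
    by (auto simp: fun_eq_iff power2_eq_square algebra_simps)
  then show ?thesis
    using assms L2_integrable_mult[OF assms] unfolding L2_def by auto
qed

lemma L2norm_nonneg [simp]: "L2norm u \<ge> 0"
  unfolding L2norm_def by (simp add: integral_nonneg_AE)

lemma power2_L2norm: "(L2norm u)\<^sup>2 = (LINT x|lebesgue. (u x)\<^sup>2)"
  unfolding L2norm_def by (simp add: integral_nonneg_AE)

lemma power2_L2norm_add_le:
  assumes "L2 a" "L2 b"
  shows "(L2norm (\<lambda>x. a x + b x))\<^sup>2 \<le> 2 * (L2norm a)\<^sup>2 + 2 * (L2norm b)\<^sup>2"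
proof -
  have "(LINT x|lebesgue. (a x + b x)\<^sup>2) \<le> (LINT x|lebesgue. 2 * (a x)\<^sup>2 + 2 * (b x)\<^sup>2)"
  proof (rule integral_mono)
    show "integrable lebesgue (\<lambda>x. (a x + b x)\<^sup>2)" using L2_add[OF assms] unfolding L2_def by auto
    show "integrable lebesgue (\<lambda>x. 2 * (a x)\<^sup>2 + 2 * (b x)\<^sup>2)" using assms unfolding L2_def by auto
    show "(a x + b x)\<^sup>2 \<le> 2 * (a x)\<^sup>2 + 2 * (b x)\<^sup>2" for x
      using sum_squares_bound[of "a x" "b x"] by (simp add: power2_eq_square algebra_simps)
  qed
  then show ?thesis
    using assms unfolding power2_L2norm L2_def by simp
qed

lemma abs_mult_le_weighted_squares:
  fixes a b s :: real
  assumes "s > 0"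
  shows "\<bar>a * b\<bar> \<le> s/2 * a\<^sup>2 + 1/(2 * s) * b\<^sup>2"
proof -
  have "2 * s * (\<bar>a\<bar> * \<bar>b\<bar>) \<le> s\<^sup>2 * a\<^sup>2 + b\<^sup>2"
    using zero_le_power2[of "s * \<bar>a\<bar> - \<bar>b\<bar>"] by (simp add: power2_diff power_mult_distrib)
  then have "\<bar>a\<bar> * \<bar>b\<bar> \<le> (s\<^sup>2 * a\<^sup>2 + b\<^sup>2) / (2 * s)"
    using assms by (simp add: pos_le_divide_eq mult.commute mult.left_commute)
  also have "\<dots> = s/2 * a\<^sup>2 + 1/(2 * s) * b\<^sup>2"
    using assms by (simp add: field_simps power2_eq_square)
  finally show ?thesis by (simp add: abs_mult)
qed

lemma abs_integral_mult_le_weighted: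
  assumes "L2 a" "L2 b" "s > 0"
  shows "\<bar>LINT x|lebesgue. a x * b x\<bar> \<le> s/2 * (L2norm a)\<^sup>2 + 1/(2 * s) * (L2norm b)\<^sup>2"
proof -
  have "\<bar>LINT x|lebesgue. a x * b x\<bar> \<le> (LINT x|lebesgue. \<bar>a x * b x\<bar>)"
    by (rule integral_abs_bound)
  also have "\<dots> \<le> (LINT x|lebesgue. s/2 * (a x)\<^sup>2 + 1/(2 * s) * (b x)\<^sup>2)"
    using L2_integrable_mult[OF assms(1,2)] assms abs_mult_le_weighted_squares
    unfolding L2_def by (intro integral_mono) auto
  also have "\<dots> = s/2 * (L2norm a)\<^sup>2 + 1/(2 * s) * (L2norm b)\<^sup>2"
    using assms unfolding power2_L2norm L2_def by simp
  finally show ?thesis .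
qed

lemma L2_tendsto_integral_mult:
  fixes u :: "nat \<Rightarrow> R2 \<Rightarrow> real"
  assumes u: "\<And>n. L2 (u n)" and f: "L2 f" and g: "L2 g"
    and lim: "(\<lambda>n. L2norm (\<lambda>x. u n x - f x)) \<longlonglongrightarrow> 0"
  shows "(\<lambda>n. LINT x|lebesgue. u n x * g x) \<longlonglongrightarrow> (LINT x|lebesgue. f x * g x)"
proof (rule LIMSEQ_I)
  fix r :: real assume r: "r > 0"
  define G where "G = (L2norm g)\<^sup>2"
  define s where "s = (G + 1) / r"
  have G0: "G \<ge> 0" unfolding G_def by simp
  have s: "s > 0" unfolding s_def using G0 r by simp
  have "1/(2 * s) * G = G * r / (2 * (G + 1))" unfolding s_def using r G0 by (simp add: field_simps)
  also have "\<dots> < r/2" using r G0 by (simp add: field_simps)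
  finally have G: "1/(2 * s) * G < r/2" .
  have "(\<lambda>n. (L2norm (\<lambda>x. u n x - f x))\<^sup>2) \<longlonglongrightarrow> 0"
    using tendsto_power[OF lim, of 2] by simp
  from LIMSEQ_D[OF this, of "r / s"] obtain N
    where N: "\<And>n. n \<ge> N \<Longrightarrow> (L2norm (\<lambda>x. u n x - f x))\<^sup>2 < r / s"
    using r s by auto
  have "\<bar>(LINT x|lebesgue. u n x * g x) - (LINT x|lebesgue. f x * g x)\<bar> < r" if "n \<ge> N" for n
  proof -
    have "(LINT x|lebesgue. u n x * g x) - (LINT x|lebesgue. f x * g x)
        = (LINT x|lebesgue. (u n x - f x) * g x)"
      using L2_integrable_mult[OF u g] L2_integrable_mult[OF f g] by (simp add: left_diff_distrib)
    also have "\<bar>\<dots>\<bar> \<le> s/2 * (L2norm (\<lambda>x. u n x - f x))\<^sup>2 + 1/(2 * s) * G"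
      unfolding G_def using abs_integral_mult_le_weighted[OF L2_diff[OF u f] g s] .
    also have "\<dots> < s/2 * (r / s) + r/2"
      using N[OF that] s G by (intro add_le_less_mono mult_left_mono) auto
    also have "\<dots> = r" using s by simp
    finally show ?thesis .
  qed
  then show "\<exists>N. \<forall>n\<ge>N. norm ((LINT x|lebesgue. u n x * g x) - (LINT x|lebesgue. f x * g x)) < r"
    by auto
qed

section \<open>Continuously differentiable functions and test fields\<close>

definition C1 :: "(R2 \<Rightarrow> 'b::real_normed_vector) \<Rightarrow> bool" where
  "C1 g \<longleftrightarrow> (\<exists>D. (\<forall>x. (g has_derivative D x) (at x)) \<and> (\<forall>v. continuous_on UNIV (\<lambda>x. D x v)))"

lemma C1c_iff: "C1c \<phi> \<longleftrightarrow> C1 \<phi> \<and> compact (tsupport \<phi>)"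
  unfolding C1c_def C1_def by simp

lemma C1E:
  assumes "C1 g"
  obtains D where "\<And>x. (g has_derivative D x) (at x)" "\<And>v. continuous_on UNIV (\<lambda>x. D x v)"
  using assms unfolding C1_def by blast

lemma C1_imp_continuous_on: "C1 g \<Longrightarrow> continuous_on UNIV g"
  by (metis C1E continuous_at_imp_continuous_on has_derivative_continuous)

lemma C1_const: "C1 (\<lambda>x. c)"
  unfolding C1_def by (rule exI[of _ "\<lambda>x h. 0"]) (simp add: has_derivative_const)

lemma C1_add:
  fixes f g :: "R2 \<Rightarrow> 'b::real_normed_vector"
  assumes "C1 f" "C1 g"
  shows "C1 (\<lambda>x. f x + g x)"
proof -
  obtain Df Dg where "\<And>x. (f has_derivative Df x) (at x)" "\<And>v. continuous_on UNIV (\<lambda>x. Df x v)"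
    "\<And>x. (g has_derivative Dg x) (at x)" "\<And>v. continuous_on UNIV (\<lambda>x. Dg x v)"
    using assms by (metis C1E)
  then show ?thesis unfolding C1_def
    by (intro exI[of _ "\<lambda>x h. Df x h + Dg x h"] conjI allI has_derivative_add continuous_intros)
qed

lemma C1_diff:
  fixes f g :: "R2 \<Rightarrow> 'b::real_normed_vector"
  assumes "C1 f" "C1 g"
  shows "C1 (\<lambda>x. f x - g x)"
proof -
  obtain Df Dg where "\<And>x. (f has_derivative Df x) (at x)" "\<And>v. continuous_on UNIV (\<lambda>x. Df x v)"
    "\<And>x. (g has_derivative Dg x) (at x)" "\<And>v. continuous_on UNIV (\<lambda>x. Dg x v)"
    using assms by (metis C1E)
  then show ?thesis unfolding C1_def
    by (intro exI[of _ "\<lambda>x h. Df x h - Dg x h"] conjI allI has_derivative_diff continuous_intros)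
qed

lemma C1_scaleR:
  fixes a :: "R2 \<Rightarrow> real" and g :: "R2 \<Rightarrow> 'b::real_normed_vector"
  assumes "C1 a" "C1 g"
  shows "C1 (\<lambda>x. a x *\<^sub>R g x)"
proof -
  obtain Da Dg where Da: "\<And>x. (a has_derivative Da x) (at x)" "\<And>v. continuous_on UNIV (\<lambda>x. Da x v)"
    and Dg: "\<And>x. (g has_derivative Dg x) (at x)" "\<And>v. continuous_on UNIV (\<lambda>x. Dg x v)"
    using assms by (metis C1E)
  have "continuous_on UNIV a" "continuous_on UNIV g" using assms C1_imp_continuous_on by auto
  with Da Dg show ?thesis unfolding C1_def
    by (intro exI[of _ "\<lambda>x h. a x *\<^sub>R Dg x h + Da x h *\<^sub>R g x"] conjI allI
        has_derivative_scaleR continuous_intros) auto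
qed

lemma C1_divide:
  fixes a b :: "R2 \<Rightarrow> real"
  assumes "C1 a" "C1 b" "\<And>x. b x \<noteq> 0"
  shows "C1 (\<lambda>x. a x / b x)"
proof -
  obtain Da Db where Da: "\<And>x. (a has_derivative Da x) (at x)" "\<And>v. continuous_on UNIV (\<lambda>x. Da x v)"
    and Db: "\<And>x. (b has_derivative Db x) (at x)" "\<And>v. continuous_on UNIV (\<lambda>x. Db x v)"
    using assms(1,2) by (metis C1E)
  have "continuous_on UNIV a" "continuous_on UNIV b" using assms C1_imp_continuous_on by auto
  with Da Db assms(3) show ?thesis unfolding C1_def
    by (intro exI[of _ "\<lambda>x h. - a x * (inverse (b x) * Db x h * inverse (b x)) + Da x h / b x"]
        conjI allI has_derivative_divide continuous_intros) auto
qed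

lemma C1_compose_real:
  fixes q q' :: "real \<Rightarrow> real" and g :: "R2 \<Rightarrow> real"
  assumes q: "\<And>t. (q has_real_derivative q' t) (at t)" "continuous_on UNIV q'" and g: "C1 g"
  shows "C1 (\<lambda>x. q (g x))"
proof -
  obtain Dg where Dg: "\<And>x. (g has_derivative Dg x) (at x)" "\<And>v. continuous_on UNIV (\<lambda>x. Dg x v)"
    using C1E[OF g] by blast
  have "((\<lambda>x. q (g x)) has_derivative (\<lambda>h. q' (g x) * Dg x h)) (at x)" for x
    using has_derivative_compose[OF Dg(1) q(1)[unfolded has_field_derivative_def]] .
  moreover have "continuous_on UNIV (\<lambda>x. q' (g x) * Dg x v)" for v
    using C1_imp_continuous_on[OF g] Dg(2)
    by (intro continuous_intros continuous_on_compose2[OF q(2)]) auto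
  ultimately show ?thesis unfolding C1_def
    by (intro exI[of _ "\<lambda>x h. q' (g x) * Dg x h"] conjI allI)
qed

definition ramp_sq :: "real \<Rightarrow> real" where
  "ramp_sq t = (if t \<le> 0 then 0 else t\<^sup>2)"

lemma ramp_sq_has_real_derivative: "(ramp_sq has_real_derivative (2 * max 0 t)) (at t)"
proof -
  have "((\<lambda>t. if t \<in> {..0} then 0 else t\<^sup>2) has_derivative
      (if t \<in> {..0} then (\<lambda>h. 0) else (\<lambda>h. 2 * t * h))) (at t within ({..0} \<union> {0<..}))"
    by (rule has_derivative_If_within_closures) (auto intro!: derivative_eq_intros)
  moreover have "{..0} \<union> {0<..} = (UNIV::real set)" by auto
  moreover have "(\<lambda>t. if t \<in> {..0} then 0 else t\<^sup>2) = ramp_sq"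
    by (auto simp: ramp_sq_def fun_eq_iff)
  moreover have "(if t \<in> {..0} then (\<lambda>h. 0) else (\<lambda>h. 2 * t * h)) = (*) (2 * max 0 t)"
    by (auto simp: fun_eq_iff)
  ultimately show ?thesis unfolding has_field_derivative_def by simp
qed

lemma C1_ramp_sq: "C1 g \<Longrightarrow> C1 (\<lambda>x. ramp_sq (g x))"
  by (rule C1_compose_real[OF ramp_sq_has_real_derivative]) (intro continuous_intros)

text \<open>The cutoff is \<open>A/(A+B)\<close> with \<open>A = ramp_sq(R\<^sup>2 - |x-y|\<^sup>2)\<close>, \<open>B = ramp_sq(|x-y|\<^sup>2 - r\<^sup>2)\<close>;
  the denominator never vanishes since \<open>r < R\<close>.\<close>
lemma C1_cutoff_exists:
  fixes y :: R2
  assumes "0 < r" "r < R"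
  obtains ch :: "R2 \<Rightarrow> real"
  where "C1 ch" "\<And>x. dist y x \<le> r \<Longrightarrow> ch x = 1" "\<And>x. R \<le> dist y x \<Longrightarrow> ch x = 0"
proof -
  define p where "p x = inner (x - y) (x - y)" for x
  have p: "p x = (dist y x)\<^sup>2" for x
    unfolding p_def by (simp add: power2_norm_eq_inner dist_norm norm_minus_commute)
  define A where "A x = ramp_sq (R\<^sup>2 - p x)" for x
  define B where "B x = ramp_sq (p x - r\<^sup>2)" for x
  have Cp: "C1 p" unfolding C1_def p_def
    by (rule exI[of _ "\<lambda>x h. inner h (x - y) + inner (x - y) h"])
       (auto intro!: derivative_eq_intros continuous_intros)
  have CA: "C1 A" and CB: "C1 B"
    unfolding A_def[abs_def] B_def[abs_def] by (intro C1_ramp_sq C1_diff C1_const Cp)+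
  have "r\<^sup>2 < R\<^sup>2" using assms by (simp add: power_strict_mono)
  then have pos: "A x + B x \<noteq> 0" for x
    unfolding A_def B_def ramp_sq_def by (auto simp: add_pos_nonneg add_nonneg_pos)
  show ?thesis
  proof (rule that[of "\<lambda>x. A x / (A x + B x)"])
    show "C1 (\<lambda>x. A x / (A x + B x))" using CA CB pos by (intro C1_divide C1_add)
  next
    fix x assume "dist y x \<le> r"
    then have "p x \<le> r\<^sup>2" unfolding p using power_mono[of "dist y x" r 2] by simp
    then show "A x / (A x + B x) = 1" using pos[of x] unfolding B_def ramp_sq_def by simp
  next
    fix x assume "R \<le> dist y x"
    then have "R\<^sup>2 \<le> p x" unfolding p using power_mono[of R "dist y x" 2] assms by linarith
    then show "A x / (A x + B x) = 0" unfolding A_def ramp_sq_def by simp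
  qed
qed

lemma divg_eq_derivative:
  assumes "\<And>x. (\<phi> has_derivative D x) (at x)"
  shows "divg \<phi> x = fst (D x (1,0)) + snd (D x (0,1))"
  unfolding divg_def using frechet_derivative_at[OF assms[of x]] by simp

lemma continuous_on_divg: "C1 \<phi> \<Longrightarrow> continuous_on UNIV (divg \<phi>)"
proof -
  assume "C1 \<phi>"
  then obtain D where D: "\<And>x. (\<phi> has_derivative D x) (at x)" "\<And>v. continuous_on UNIV (\<lambda>x. D x v)"
    by (metis C1E)
  have "divg \<phi> = (\<lambda>x. fst (D x (1,0)) + snd (D x (0,1)))"
    using divg_eq_derivative[OF D(1)] by auto
  then show ?thesis using D(2) by (simp add: continuous_intros)
qed

lemma divg_add:
  assumes "C1 \<phi>" "C1 \<psi>"
  shows "divg (\<lambda>x. \<phi> x + \<psi> x) x = divg \<phi> x + divg \<psi> x"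
proof -
  obtain D E where D: "\<And>x. (\<phi> has_derivative D x) (at x)" and E: "\<And>x. (\<psi> has_derivative E x) (at x)"
    using assms by (metis C1E)
  have "((\<lambda>x. \<phi> x + \<psi> x) has_derivative (\<lambda>h. D x h + E x h)) (at x)" for x
    using D E by (rule has_derivative_add)
  from divg_eq_derivative[OF this] divg_eq_derivative[OF D] divg_eq_derivative[OF E] show ?thesis
    by simp
qed

lemma divg_scaleR:
  assumes "C1 \<phi>"
  shows "divg (\<lambda>x. c *\<^sub>R \<phi> x) x = c * divg \<phi> x"
proof -
  obtain D where D: "\<And>x. (\<phi> has_derivative D x) (at x)"
    using assms by (metis C1E)
  have "((\<lambda>x. c *\<^sub>R \<phi> x) has_derivative (\<lambda>h. c *\<^sub>R D x h)) (at x)" for x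
    using D by (rule has_derivative_scaleR_right)
  from divg_eq_derivative[OF this] divg_eq_derivative[OF D] show ?thesis
    by (simp add: algebra_simps)
qed

lemma divg_eq_0_outside_tsupport:
  assumes "C1 \<phi>" "x \<notin> tsupport \<phi>"
  shows "divg \<phi> x = 0"
proof -
  obtain D where D: "\<And>x. (\<phi> has_derivative D x) (at x)"
    using assms(1) by (metis C1E)
  have "(\<phi> has_derivative (\<lambda>h. 0)) (at x)"
    by (rule has_derivative_transform_within_open[OF has_derivative_const, where s="- tsupport \<phi>"])
       (use assms(2) in \<open>auto intro: closure_subset[THEN subsetD]\<close>)
  then have "D x = (\<lambda>h. 0)" using D has_derivative_unique by blast
  then show ?thesis using divg_eq_derivative[OF D, of x] by simp
qed

lemma divg_zero: "divg (\<lambda>x. 0) x = 0"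
  using divg_eq_0_outside_tsupport[OF C1_const] by simp

lemma C1c_zero: "C1c (\<lambda>x. 0)"
  unfolding C1c_iff using C1_const by auto

lemma L2_divg: "C1c \<phi> \<Longrightarrow> L2 (divg \<phi>)"
  unfolding C1c_iff
  by (intro L2_continuous_compact_support[where K="tsupport \<phi>"] continuous_on_divg
      divg_eq_0_outside_tsupport) auto

lemma C1c_bounded:
  assumes "C1c \<phi>"
  obtains M where "M > 0" "\<And>x. norm (\<phi> x) \<le> M"
proof -
  have "compact (\<phi> ` tsupport \<phi>)"
    using assms C1_imp_continuous_on unfolding C1c_iff
    by (blast intro: compact_continuous_image continuous_on_subset)
  then obtain M where M: "M > 0" "\<forall>y \<in> \<phi> ` tsupport \<phi>. norm y \<le> M"
    by (metis compact_imp_bounded bounded_pos)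
  have "norm (\<phi> x) \<le> M" for x
    using M closure_subset[of "{x. \<phi> x \<noteq> 0}"] by (cases "\<phi> x = 0") auto
  with M(1) show thesis by (rule that)
qed

lemma div_pairing_add:
  assumes "L2 u" "C1c \<phi>" "C1c \<psi>"
  shows "div_pairing u (\<lambda>x. \<phi> x + \<psi> x) = div_pairing u \<phi> + div_pairing u \<psi>"
proof -
  have "(\<lambda>x. u x * divg (\<lambda>x. \<phi> x + \<psi> x) x) = (\<lambda>x. u x * divg \<phi> x + u x * divg \<psi> x)"
    using assms(2,3) by (simp add: C1c_iff divg_add distrib_left)
  then show ?thesis
    using L2_integrable_mult[OF assms(1) L2_divg] assms(2,3) by simp
qed

section \<open>Total variation and its locality\<close>

lemma div_pairing_eq_0_if_TV_on_zero:
  assumes TV: "TV_on U u = 0" and \<phi>: "C1c \<phi>" "tsupport \<phi> \<subseteq> U"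
  shows "div_pairing u \<phi> = 0"
proof -
  obtain M where M: "M > 0" "\<And>x. norm (\<phi> x) \<le> M" using C1c_bounded[OF \<phi>(1)] by blast
  have le: "c * div_pairing u \<phi> \<le> 0" if c: "\<bar>c\<bar> = 1/M" for c
  proof -
    let ?\<psi> = "\<lambda>x. c *\<^sub>R \<phi> x"
    have "c \<noteq> 0" using c M by auto
    then have supp: "{x. ?\<psi> x \<noteq> 0} = {x. \<phi> x \<noteq> 0}" by auto
    have "C1c ?\<psi>" using \<phi>(1) C1_scaleR[OF C1_const] supp unfolding C1c_iff by auto
    moreover have "norm (?\<psi> x) \<le> 1" for x
      using c M mult_left_mono[OF M(2)[of x], of "\<bar>c\<bar>"] by simp
    ultimately have "ereal (div_pairing u ?\<psi>) \<le> TV_on U u"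
      unfolding TV_on_def using \<phi>(2) supp by (intro SUP_upper) auto
    moreover have "div_pairing u ?\<psi> = c * div_pairing u \<phi>"
      using \<phi>(1) by (simp add: C1c_iff divg_scaleR mult.left_commute)
    ultimately show ?thesis using TV by (simp add: zero_ereal_def)
  qed
  from le[of "1/M"] le[of "-1/M"] M(1) show ?thesis
    by (auto simp: mult_le_0_iff)
qed

lemma TV_on_eq_0I:
  assumes "\<And>\<phi>. C1c \<phi> \<Longrightarrow> tsupport \<phi> \<subseteq> U \<Longrightarrow> div_pairing u \<phi> = 0"
  shows "TV_on U u = 0"
proof -
  let ?S = "{\<phi>. C1c \<phi> \<and> tsupport \<phi> \<subseteq> U \<and> (\<forall>x. norm (\<phi> x) \<le> 1)}"
  have "(\<lambda>x. 0) \<in> ?S" using C1c_zero by simp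
  then have "?S \<noteq> {}" by blast
  moreover have "TV_on U u = (SUP \<phi> \<in> ?S. ereal 0)"
    unfolding TV_on_def using assms by (intro SUP_cong) auto
  ultimately show ?thesis by (simp add: zero_ereal_def)
qed

lemma J_nonneg: "J u \<ge> 0"
proof -
  have "ereal (div_pairing u (\<lambda>x. 0)) \<le> J u"
    unfolding J_def TV_on_def using C1c_zero by (intro SUP_upper) auto
  then show ?thesis by (simp add: divg_zero zero_ereal_def)
qed

lemma C1c_split_near_far:
  assumes \<phi>: "C1c \<phi>" and r: "r > 0"
  obtains \<psi>\<^sub>1 \<psi>\<^sub>2 where "C1c \<psi>\<^sub>1" "C1c \<psi>\<^sub>2" "\<phi> = (\<lambda>x. \<psi>\<^sub>1 x + \<psi>\<^sub>2 x)"
    "tsupport \<psi>\<^sub>1 \<subseteq> tsupport \<phi> \<inter> cball z (2 * r)" "tsupport \<psi>\<^sub>2 \<subseteq> tsupport \<phi> - ball z r"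
proof -
  obtain ch :: "R2 \<Rightarrow> real" where ch: "C1 ch" "\<And>x. dist z x \<le> r \<Longrightarrow> ch x = 1"
    "\<And>x. 2 * r \<le> dist z x \<Longrightarrow> ch x = 0"
    using C1_cutoff_exists[of r "2 * r" z] r by auto
  define \<psi>\<^sub>1 where "\<psi>\<^sub>1 x = ch x *\<^sub>R \<phi> x" for x
  define \<psi>\<^sub>2 where "\<psi>\<^sub>2 x = \<phi> x - \<psi>\<^sub>1 x" for x
  have C1: "C1 \<phi>" and K: "compact (tsupport \<phi>)" using \<phi> unfolding C1c_iff by auto
  have "{x. \<psi>\<^sub>1 x \<noteq> 0} \<subseteq> tsupport \<phi> \<inter> cball z (2 * r)"
    using ch(3) closure_subset[of "{x. \<phi> x \<noteq> 0}"] unfolding \<psi>\<^sub>1_def by (force simp: dist_commute)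
  then have supp1: "tsupport \<psi>\<^sub>1 \<subseteq> tsupport \<phi> \<inter> cball z (2 * r)"
    by (intro closure_minimal) auto
  have "{x. \<psi>\<^sub>2 x \<noteq> 0} \<subseteq> tsupport \<phi> \<inter> - ball z r"
    using ch(2) closure_subset[of "{x. \<phi> x \<noteq> 0}"] unfolding \<psi>\<^sub>2_def \<psi>\<^sub>1_def by force
  then have supp2: "tsupport \<psi>\<^sub>2 \<subseteq> tsupport \<phi> - ball z r"
    using closure_minimal[of "{x. \<psi>\<^sub>2 x \<noteq> 0}" "tsupport \<phi> \<inter> - ball z r"] by auto
  have "C1 \<psi>\<^sub>1" "C1 \<psi>\<^sub>2"
    unfolding \<psi>\<^sub>2_def[abs_def] \<psi>\<^sub>1_def[abs_def] by (intro C1_scaleR C1_diff ch(1) C1)+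
  moreover have "compact (tsupport \<psi>\<^sub>1)" "compact (tsupport \<psi>\<^sub>2)"
    using supp1 supp2 K
    by (meson Diff_subset Int_subset_iff bounded_subset closed_closure compact_eq_bounded_closed subset_trans)+
  moreover have "\<phi> = (\<lambda>x. \<psi>\<^sub>1 x + \<psi>\<^sub>2 x)" unfolding \<psi>\<^sub>2_def by simp
  ultimately show thesis
    using that supp1 supp2 unfolding C1c_iff by blast
qed

lemma div_pairing_eq_0_if_finite_cover:
  fixes u :: "R2 \<Rightarrow> real" and rad :: "R2 \<Rightarrow> real"
  assumes u: "L2 u" and F: "finite F" and rad: "\<And>z. z \<in> F \<Longrightarrow> rad z > 0"
    and near: "\<And>z \<psi>. z \<in> F \<Longrightarrow> C1c \<psi> \<Longrightarrow> tsupport \<psi> \<subseteq> cball z (2 * rad z) \<Longrightarrow> div_pairing u \<psi> = 0"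
    and \<phi>: "C1c \<phi>" "tsupport \<phi> \<subseteq> (\<Union>z\<in>F. ball z (rad z))"
  shows "div_pairing u \<phi> = 0"
  using F \<phi> rad near
proof (induction F arbitrary: \<phi> rule: finite_induct)
  case empty
  then have "\<phi> = (\<lambda>x. 0)" using closure_subset[of "{x. \<phi> x \<noteq> 0}"] by auto
  then show ?case by (simp add: divg_zero)
next
  case (insert z F)
  obtain \<psi>\<^sub>1 \<psi>\<^sub>2 where \<psi>: "C1c \<psi>\<^sub>1" "C1c \<psi>\<^sub>2" "\<phi> = (\<lambda>x. \<psi>\<^sub>1 x + \<psi>\<^sub>2 x)"
    "tsupport \<psi>\<^sub>1 \<subseteq> tsupport \<phi> \<inter> cball z (2 * rad z)" "tsupport \<psi>\<^sub>2 \<subseteq> tsupport \<phi> - ball z (rad z)"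
    using C1c_split_near_far[OF insert.prems(1), where r="rad z" and z=z] insert.prems(3) by blast
  have "div_pairing u \<psi>\<^sub>1 = 0" using insert.prems(4)[of z \<psi>\<^sub>1] \<psi>(1,4) by auto
  moreover have "tsupport \<psi>\<^sub>2 \<subseteq> (\<Union>z\<in>F. ball z (rad z))" using \<psi>(5) insert.prems(2) by auto
  then have "div_pairing u \<psi>\<^sub>2 = 0" using insert.IH[of \<psi>\<^sub>2] \<psi>(2) insert.prems(3,4) by blast
  ultimately show ?case using div_pairing_add[OF u \<psi>(1,2)] \<psi>(3) by simp
qed

text \<open>The support of a test field is covered by finitely many balls, each chosen so that its
  double still lies in an open set on which \<open>|Du|\<close> vanishes.\<close>
lemma TV_on_Compl_suppD:
  assumes u: "L2 u"
  shows "TV_on (- suppD u) u = 0"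
proof (rule TV_on_eq_0I)
  fix \<phi> assume \<phi>: "C1c \<phi>" "tsupport \<phi> \<subseteq> - suppD u"
  let ?K = "tsupport \<phi>"
  have "\<exists>e>0. \<exists>V. open V \<and> TV_on V u = 0 \<and> cball z (2 * e) \<subseteq> V" if "z \<in> ?K" for z
  proof -
    have "z \<in> \<Union>{V. open V \<and> TV_on V u = 0}"
      using \<phi>(2) that unfolding suppD_def by auto
    then obtain V where V: "open V" "TV_on V u = 0" "z \<in> V" by blast
    then obtain e where e: "e > 0" "ball z e \<subseteq> V" by (meson openE)
    moreover have "cball z (2 * (e/4)) \<subseteq> ball z e" using e(1) by (simp add: cball_subset_ball_iff)
    ultimately have "cball z (2 * (e/4)) \<subseteq> V" by blast
    with V e(1) show ?thesis by (meson divide_pos_pos zero_less_numeral)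
  qed
  then have "\<forall>z\<in>?K. \<exists>e. e > 0 \<and> (\<exists>V. open V \<and> TV_on V u = 0 \<and> cball z (2 * e) \<subseteq> V)"
    by blast
  from bchoice[OF this] obtain rad
    where rad: "\<forall>z\<in>?K. rad z > 0 \<and> (\<exists>V. open V \<and> TV_on V u = 0 \<and> cball z (2 * rad z) \<subseteq> V)"
    by blast
  have K: "compact ?K" using \<phi>(1) unfolding C1c_iff by blast
  have "?K \<subseteq> (\<Union>z\<in>?K. ball z (rad z))" using rad by auto
  then obtain F where F: "F \<subseteq> ?K" "finite F" "?K \<subseteq> (\<Union>z\<in>F. ball z (rad z))"
    using compactE_image[OF K, of ?K "\<lambda>z. ball z (rad z)"] by blast
  show "div_pairing u \<phi> = 0"
  proof (rule div_pairing_eq_0_if_finite_cover[OF u F(2) _ _ \<phi>(1) F(3)])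
    show "rad z > 0" if "z \<in> F" for z using rad F(1) that by blast
    fix z \<psi> assume z: "z \<in> F" and \<psi>: "C1c \<psi>" "tsupport \<psi> \<subseteq> cball z (2 * rad z)"
    then obtain V where "open V" "TV_on V u = 0" "cball z (2 * rad z) \<subseteq> V" using rad F(1) by blast
    with \<psi> show "div_pairing u \<psi> = 0" by (blast intro: div_pairing_eq_0_if_TV_on_zero)
  qed
qed

section \<open>Stability of the minimizers\<close>

lemma minimizer_L2norm_dist_le:
  assumes min: "is_minimizer lam (\<lambda>x. f x + w x) u" and f: "L2 f" and w: "L2 w"
    and lam: "lam > 0" and Jf: "J f = ereal j"
  shows "(L2norm (\<lambda>x. u x - f x))\<^sup>2 \<le> 4 * lam * j + 4 * (L2norm w)\<^sup>2"
proof -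
  let ?a = "\<lambda>x. u x - (f x + w x)"
  have u: "L2 u" using min unfolding is_minimizer_def by blast
  have "ereal ((L2norm ?a)\<^sup>2 / 2) \<le> ereal lam * J u + ereal ((L2norm ?a)\<^sup>2 / 2)"
    using J_nonneg[of u] lam by (intro add_increasing) auto
  also have "\<dots> \<le> ereal lam * J f + ereal ((L2norm (\<lambda>x. f x - (f x + w x)))\<^sup>2 / 2)"
    using min f unfolding is_minimizer_def by blast
  also have "\<dots> = ereal (2 * lam * j + (L2norm w)\<^sup>2) / 2"
    using Jf unfolding power2_L2norm by simp
  finally have a: "(L2norm ?a)\<^sup>2 \<le> 2 * lam * j + (L2norm w)\<^sup>2" by simp
  have "(L2norm (\<lambda>x. u x - f x))\<^sup>2 = (L2norm (\<lambda>x. ?a x + w x))\<^sup>2" by simp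
  also have "\<dots> \<le> 2 * (L2norm ?a)\<^sup>2 + 2 * (L2norm w)\<^sup>2"
    by (rule power2_L2norm_add_le[OF L2_diff[OF u L2_add[OF f w]] w])
  finally show ?thesis using a by linarith
qed

lemma suppD_subset_PK_liminf:
  assumes f: "L2 f" and u: "\<And>n. L2 (u n)" and lim: "(\<lambda>n. L2norm (\<lambda>x. u n x - f x)) \<longlonglongrightarrow> 0"
  shows "suppD f \<subseteq> PK_liminf (\<lambda>n. suppD (u n))"
proof
  fix x assume x: "x \<in> suppD f"
  have "eventually (\<lambda>n. \<exists>y\<in>suppD (u n). dist x y < e) sequentially" if e: "e > 0" for e
  proof (rule ccontr)
    assume "\<not> ?thesis"
    then have "frequently (\<lambda>n. \<not> (\<exists>y\<in>suppD (u n). dist x y < e)) sequentially"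
      unfolding not_eventually .
    then have miss: "frequently (\<lambda>n. ball x e \<subseteq> - suppD (u n)) sequentially"
      by (rule frequently_elim1) (auto simp: ball_def)
    have "TV_on (ball x (e/2)) f = 0"
    proof (rule TV_on_eq_0I)
      fix \<phi> assume \<phi>: "C1c \<phi>" "tsupport \<phi> \<subseteq> ball x (e/2)"
      have sub: "tsupport \<phi> \<subseteq> ball x e" using \<phi>(2) subset_ball[of "e/2" e x] e by simp
      have "div_pairing (u n) \<phi> = 0" if "ball x e \<subseteq> - suppD (u n)" for n
      proof -
        have "tsupport \<phi> \<subseteq> - suppD (u n)" using sub that by blast
        then show ?thesis by (rule div_pairing_eq_0_if_TV_on_zero[OF TV_on_Compl_suppD[OF u] \<phi>(1)])
      qed
      then have freq: "frequently (\<lambda>n. div_pairing (u n) \<phi> = 0) sequentially"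
        by (rule frequently_elim1[OF miss])
      have "(\<lambda>n. div_pairing (u n) \<phi>) \<longlonglongrightarrow> div_pairing f \<phi>"
        using L2_tendsto_integral_mult[OF u f L2_divg[OF \<phi>(1)] lim] .
      show "div_pairing f \<phi> = 0"
      proof (rule ccontr)
        assume "div_pairing f \<phi> \<noteq> 0"
        with \<open>(\<lambda>n. div_pairing (u n) \<phi>) \<longlonglongrightarrow> div_pairing f \<phi>\<close>
        have "eventually (\<lambda>n. div_pairing (u n) \<phi> \<noteq> 0) sequentially"
          by (rule tendsto_imp_eventually_ne)
        with freq show False by (simp add: frequently_def)
      qed
    qed
    then have "x \<in> \<Union>{U. open U \<and> TV_on U f = 0}"
      using e by (intro UnionI[of "ball x (e/2)"]) auto
    with x show False unfolding suppD_def by blast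
  qed
  then show "x \<in> PK_liminf (\<lambda>n. suppD (u n))" unfolding PK_liminf_def by blast
qed

theorem mainTheorem11:
  fixes f :: "R2 \<Rightarrow> real" and w u :: "nat \<Rightarrow> R2 \<Rightarrow> real" and lam :: "nat \<Rightarrow> real"
  assumes "L2 f" and "J f < \<infinity>"
    and "\<And>n. L2 (w n)" and "(\<lambda>n. L2norm (w n)) \<longlonglongrightarrow> 0"
    and "\<And>n. lam n > 0" and "lam \<longlonglongrightarrow> 0"
    and "\<And>n. is_minimizer (lam n) (\<lambda>x. f x + w n x) (u n)"
  shows "(\<lambda>n. L2norm (\<lambda>x. u n x - f x)) \<longlonglongrightarrow> 0
         \<and> suppD f \<subseteq> PK_liminf (\<lambda>n. suppD (u n))"
proof -
  have u: "L2 (u n)" for n using assms(7) unfolding is_minimizer_def by blast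
  obtain j where j: "J f = ereal j" using assms(2) J_nonneg[of f] by (cases "J f") auto
  have bound: "(L2norm (\<lambda>x. u n x - f x))\<^sup>2 \<le> 4 * lam n * j + 4 * (L2norm (w n))\<^sup>2" for n
    using minimizer_L2norm_dist_le[OF assms(7) assms(1,3,5) j] .
  have "(\<lambda>n. 4 * lam n * j + 4 * (L2norm (w n))\<^sup>2) \<longlonglongrightarrow> 4 * 0 * j + 4 * 0\<^sup>2"
    by (intro tendsto_intros assms(4,6))
  then have upper: "(\<lambda>n. 4 * lam n * j + 4 * (L2norm (w n))\<^sup>2) \<longlonglongrightarrow> 0" by simp
  have "(\<lambda>n. (L2norm (\<lambda>x. u n x - f x))\<^sup>2) \<longlonglongrightarrow> 0"
    by (rule tendsto_sandwich[OF _ _ tendsto_const upper]) (use bound in auto)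
  then have "(\<lambda>n. sqrt ((L2norm (\<lambda>x. u n x - f x))\<^sup>2)) \<longlonglongrightarrow> sqrt 0"
    by (rule tendsto_real_sqrt)
  then have conv: "(\<lambda>n. L2norm (\<lambda>x. u n x - f x)) \<longlonglongrightarrow> 0" by simp
  show ?thesis using conv suppD_subset_PK_liminf[OF assms(1) u conv] by blast
qed

end
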